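(* Let $h\colon\{0,1\}^k\to\{0,1\}$ be a partial function, and let $\mathcal D_0,\mathcal D_1,\mathcal D_2$ be probability distributions over $h^{-1}(0)$, $h^{-1}(1)$, and $h^{-1}(0)\cup h^{-1}(1)$ respectively. Then for every $0<\varepsilon\le 1/10$ there exists a conjunction $C\colon\{0,1\}^k\to\{0,1\}$ of width $\mathsf{WAPP}_\varepsilon(h)$ such that $C(\mathcal D_0)\le\delta\cdot C(\mathcal D_1)$, $C(\mathcal D_2)\le(1+\delta)\cdot C(\mathcal D_1)$, and $C(\mathcal D_1)>0$, where $\delta=2\sqrt{\varepsilon}$.
   Context: A conjunction is an AND of literals; its width is its number of literals. For a conjunction $C$ and distribution $\mathcal D$, $C(\mathcal D)=\Pr_{x\sim\mathcal D}[C(x)=1]$. A randomized decision tree is a probability distribution over deterministic decision trees; its cost is the maximum depth of a tree in its support. $\mathsf{WAPP}_\varepsilon(h)$ is the minimum cost of a randomized decision tree with outputs in $\{0,1\}$ such that for some $t>0$, on every $x$ with $h(x)=1$ the probability of outputting $1$ lies in $[(1-\varepsilon)t,t]$, and on every $x$ with $h(x)=0$ it lies in $[0,\varepsilon t]$. *)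

theory Defs
  imports "HOL-Probability.Probability"
begin

text \<open>Inputs in {0,1}^k are boolean lists of length k. A partial function
  h : {0,1}^k -> {0,1} is a map bool list => bool option (only lists of length k matter;
  h x = None means x is outside the domain).\<close>

datatype dtree = Leaf bool | Query nat dtree dtree

fun dt_eval :: "dtree \<Rightarrow> bool list \<Rightarrow> bool" where
  "dt_eval (Leaf b) x = b"
| "dt_eval (Query i t0 t1) x = (if x ! i then dt_eval t1 x else dt_eval t0 x)"

fun dt_depth :: "dtree \<Rightarrow> nat" where
  "dt_depth (Leaf b) = 0"
| "dt_depth (Query i t0 t1) = Suc (max (dt_depth t0) (dt_depth t1))"

fun dt_valid :: "nat \<Rightarrow> dtree \<Rightarrow> bool" where
  "dt_valid k (Leaf b) = True"
| "dt_valid k (Query i t0 t1) = (i < k \<and> dt_valid k t0 \<and> dt_valid k t1)"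

definition rdt_prob1 :: "dtree pmf \<Rightarrow> bool list \<Rightarrow> real" where
  "rdt_prob1 R x = measure_pmf.prob R {T. dt_eval T x}"

definition rdt_cost_le :: "nat \<Rightarrow> dtree pmf \<Rightarrow> nat \<Rightarrow> bool" where
  "rdt_cost_le k R d = (\<forall>T\<in>set_pmf R. dt_valid k T \<and> dt_depth T \<le> d)"

definition wapp_computes :: "nat \<Rightarrow> real \<Rightarrow> (bool list \<Rightarrow> bool option) \<Rightarrow> dtree pmf \<Rightarrow> bool" where
  "wapp_computes k \<epsilon> h R = (\<exists>t::real. t > 0 \<and>
     (\<forall>x. length x = k \<and> h x = Some True \<longrightarrow>
          (1 - \<epsilon>) * t \<le> rdt_prob1 R x \<and> rdt_prob1 R x \<le> t) \<and>
     (\<forall>x. length x = k \<and> h x = Some False \<longrightarrow>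
          0 \<le> rdt_prob1 R x \<and> rdt_prob1 R x \<le> \<epsilon> * t))"

definition WAPP :: "nat \<Rightarrow> real \<Rightarrow> (bool list \<Rightarrow> bool option) \<Rightarrow> nat" where
  "WAPP k \<epsilon> h = (LEAST d. \<exists>R. rdt_cost_le k R d \<and> wapp_computes k \<epsilon> h R)"

text \<open>A conjunction is a finite set of literals (i, b), meaning "x_i = b", over indices < k;
  its width is the number of literals.\<close>
definition conj_eval :: "(nat \<times> bool) set \<Rightarrow> bool list \<Rightarrow> bool" where
  "conj_eval L x = (\<forall>(i, b)\<in>L. x ! i = b)"

definition conj_prob :: "(nat \<times> bool) set \<Rightarrow> bool list pmf \<Rightarrow> real" where
  "conj_prob L D = measure_pmf.prob D {x. conj_eval L x}"

end

theory Submission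
  imports Defs
begin

text \<open>Every deterministic tree of depth at most \<open>d\<close> accepts exactly on a disjoint union of
  width-\<open>d\<close> conjunctions: its accepting paths, padded with further variables. Hence the
  acceptance probability of a cost-\<open>d\<close> randomized tree \<open>R\<close> is a nonnegative combination
  \<open>\<Sum>\<^sub>C w\<^sub>C C(x)\<close> of width-\<open>d\<close> conjunctions. If \<open>R\<close> witnesses \<open>WAPP\<^sub>\<epsilon>(h)\<close> with threshold
  \<open>t\<close>, averaging over the three distributions gives \<open>\<Sum>\<^sub>C w\<^sub>C C(D\<^sub>1) \<ge> (1 - \<epsilon>) t\<close>,
  \<open>\<Sum>\<^sub>C w\<^sub>C C(D\<^sub>0) \<le> \<epsilon> t\<close> and \<open>\<Sum>\<^sub>C w\<^sub>C C(D\<^sub>2) \<le> t\<close>. If every \<open>C\<close> violated one of the two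
  required inequalities, then \<open>C(D\<^sub>1) \<le> C(D\<^sub>0)/\<delta> + C(D\<^sub>2)/(1 + \<delta>)\<close> for all \<open>C\<close>, and summing
  would give \<open>(1 - \<epsilon>) t \<le> \<epsilon> t/\<delta> + t/(1 + \<delta>)\<close>, which fails for \<open>\<delta> = 2\<surd>\<epsilon>\<close> and \<open>\<epsilon> \<le> 1/10\<close>.\<close>

lemma finite_bool_lists_length_eq: "finite {x::bool list. length x = k}"
  using finite_lists_length_eq[of "UNIV :: bool set" k] by simp

lemma measure_pmf_prob_eq_sum:
  assumes "finite S" "set_pmf p \<subseteq> S"
  shows "measure_pmf.prob p {x. P x} = (\<Sum>x\<in>S. pmf p x * of_bool (P x))"
proof -
  have "measure_pmf.prob p {x. P x} = measure_pmf.prob p (S \<inter> {x. P x})"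
    using assms(2) by (intro measure_eq_AE) (auto simp: AE_measure_pmf_iff)
  also have "\<dots> = (\<Sum>x\<in>S \<inter> {x. P x}. pmf p x)"
    using assms(1) by (simp add: measure_measure_pmf_finite)
  finally show ?thesis
    using assms(1) by simp
qed

lemma finite_dtrees_depth_le: "finite {T. dt_valid k T \<and> dt_depth T \<le> n}"
proof (induction n)
  case 0
  have "{T. dt_valid k T \<and> dt_depth T \<le> 0} \<subseteq> {Leaf True, Leaf False}"
  proof
    fix T assume "T \<in> {T. dt_valid k T \<and> dt_depth T \<le> 0}"
    then show "T \<in> {Leaf True, Leaf False}" by (cases T) auto
  qed
  then show ?case by (rule finite_subset) simp
next
  case (Suc n)
  let ?S = "{T. dt_valid k T \<and> dt_depth T \<le> n}"
  have "{T. dt_valid k T \<and> dt_depth T \<le> Suc n} \<subseteq>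
      {Leaf True, Leaf False} \<union> (\<lambda>(i, t0, t1). Query i t0 t1) ` ({..<k} \<times> ?S \<times> ?S)"
  proof
    fix T assume "T \<in> {T. dt_valid k T \<and> dt_depth T \<le> Suc n}"
    then show "T \<in> {Leaf True, Leaf False} \<union> (\<lambda>(i, t0, t1). Query i t0 t1) ` ({..<k} \<times> ?S \<times> ?S)"
      by (cases T) (auto simp: image_iff)
  qed
  then show ?case
    by (rule finite_subset) (use Suc in auto)
qed

lemma finite_set_pmf_rdt:
  assumes "rdt_cost_le k R d"
  shows "finite (set_pmf R)"
proof (rule finite_subset)
  show "set_pmf R \<subseteq> {T. dt_valid k T \<and> dt_depth T \<le> d}"
    using assms unfolding rdt_cost_le_def by blast
qed (rule finite_dtrees_depth_le)

subsection \<open>WAPP is at most the number of input bits\<close>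

text \<open>\<open>full_dtree n p g\<close> has already read the prefix \<open>p\<close> of the input; it reads the next \<open>n\<close>
  bits and outputs \<open>g\<close> of the input.\<close>

fun full_dtree :: "nat \<Rightarrow> bool list \<Rightarrow> (bool list \<Rightarrow> bool) \<Rightarrow> dtree" where
  "full_dtree 0 p g = Leaf (g p)"
| "full_dtree (Suc n) p g =
     Query (length p) (full_dtree n (p @ [False]) g) (full_dtree n (p @ [True]) g)"

lemma dt_eval_full_dtree:
  assumes "length x = length p + n" "take (length p) x = p"
  shows "dt_eval (full_dtree n p g) x = g x"
  using assms
proof (induction n arbitrary: p)
  case 0
  then show ?case by simp
next
  case (Suc n)
  then have "take (Suc (length p)) x = p @ [x ! length p]"
    by (simp add: take_Suc_conv_app_nth)
  with Suc show ?case by simp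
qed

lemma dt_depth_full_dtree: "dt_depth (full_dtree n p g) = n"
  by (induction n arbitrary: p) auto

lemma dt_valid_full_dtree: "length p + n \<le> k \<Longrightarrow> dt_valid k (full_dtree n p g)"
  by (induction n arbitrary: p) auto

lemma wapp_computes_full_dtree:
  assumes "0 \<le> \<epsilon>"
  shows "wapp_computes k \<epsilon> h (return_pmf (full_dtree k [] (\<lambda>x. h x = Some True)))"
  unfolding wapp_computes_def rdt_prob1_def
  using assms dt_eval_full_dtree[of _ "[]" k] by (intro exI[of _ 1]) auto

lemma rdt_cost_le_full_dtree: "rdt_cost_le k (return_pmf (full_dtree k [] g)) k"
  by (simp add: rdt_cost_le_def dt_depth_full_dtree dt_valid_full_dtree)

lemma WAPP_le_length:
  assumes "0 \<le> \<epsilon>"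
  shows "WAPP k \<epsilon> h \<le> k"
  unfolding WAPP_def
  using wapp_computes_full_dtree[OF assms] rdt_cost_le_full_dtree by (blast intro: Least_le)

lemma WAPP_attained:
  assumes "0 \<le> \<epsilon>"
  obtains R where "rdt_cost_le k R (WAPP k \<epsilon> h)" "wapp_computes k \<epsilon> h R"
proof -
  have "\<exists>R. rdt_cost_le k R k \<and> wapp_computes k \<epsilon> h R"
    using wapp_computes_full_dtree[OF assms] rdt_cost_le_full_dtree by blast
  from LeastI[of "\<lambda>d. \<exists>R. rdt_cost_le k R d \<and> wapp_computes k \<epsilon> h R", OF this]
  show thesis
    using that unfolding WAPP_def by blast
qed

subsection \<open>Acceptance probability as a combination of conjunctions\<close>

fun dt_path_vars :: "dtree \<Rightarrow> bool list \<Rightarrow> nat set" where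
  "dt_path_vars (Leaf b) x = {}"
| "dt_path_vars (Query i t0 t1) x = insert i (dt_path_vars (if x ! i then t1 else t0) x)"

lemma dt_path_vars_agree:
  assumes "\<forall>i\<in>dt_path_vars T x. y ! i = x ! i"
  shows "dt_path_vars T y = dt_path_vars T x \<and> dt_eval T y = dt_eval T x"
  using assms by (induction T) auto

lemma card_dt_path_vars_le: "card (dt_path_vars T x) \<le> dt_depth T"
proof (induction T)
  case (Leaf b)
  then show ?case by simp
next
  case (Query i t0 t1)
  then have "card (dt_path_vars (if x ! i then t1 else t0) x) \<le> max (dt_depth t0) (dt_depth t1)"
    by auto
  then show ?case
    by (simp add: card_insert_le_m1)
qed

lemma dt_path_vars_subset: "dt_valid k T \<Longrightarrow> dt_path_vars T x \<subseteq> {..<k}"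
  by (induction T) auto

definition agree_conj :: "nat set \<Rightarrow> bool list \<Rightarrow> (nat \<times> bool) set" where
  "agree_conj V x = (\<lambda>i. (i, x ! i)) ` V"

lemma conj_eval_agree_conj: "conj_eval (agree_conj V x) y \<longleftrightarrow> (\<forall>i\<in>V. y ! i = x ! i)"
  by (auto simp: conj_eval_def agree_conj_def)

lemma card_agree_conj: "card (agree_conj V x) = card V"
  unfolding agree_conj_def by (rule card_image) (auto simp: inj_on_def)

lemma dt_eval_conj_partition:
  assumes "dt_valid k T" "dt_depth T \<le> d" "d \<le> k"
  obtains \<C> :: "(nat \<times> bool) set set"
  where "finite \<C>" "\<forall>L\<in>\<C>. finite L \<and> (\<forall>(i, b)\<in>L. i < k) \<and> card L = d"
    "\<And>x. length x = k \<Longrightarrow> (\<Sum>L\<in>\<C>. of_bool (conj_eval L x)) = (of_bool (dt_eval T x) :: real)"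
proof -
  \<comment> \<open>The padding sees \<open>x\<close> only through its path, so all inputs satisfying a padded path
    conjunction produce that same conjunction: this makes the union disjoint.\<close>
  define pad where "pad S = (SOME V. S \<subseteq> V \<and> V \<subseteq> {..<k} \<and> card V = d)" for S :: "nat set"
  define Q where "Q x = agree_conj (pad (dt_path_vars T x)) x" for x
  define \<C> where "\<C> = Q ` {x. length x = k \<and> dt_eval T x}"
  have pad: "dt_path_vars T x \<subseteq> pad (dt_path_vars T x) \<and> pad (dt_path_vars T x) \<subseteq> {..<k} \<and>
      card (pad (dt_path_vars T x)) = d" for x
    unfolding pad_def
  proof (rule someI_ex, rule exists_subset_between)
    show "card (dt_path_vars T x) \<le> d"
      using card_dt_path_vars_le[of T x] assms(2) by linarith
    show "dt_path_vars T x \<subseteq> {..<k}"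
      using dt_path_vars_subset[OF assms(1)] .
  qed (use assms(3) in simp_all)
  have Q_self: "conj_eval (Q x) x" for x
    by (simp add: Q_def conj_eval_agree_conj)
  have Q_agree: "Q y = Q x \<and> dt_eval T y = dt_eval T x" if "conj_eval (Q x) y" for x y
  proof -
    have agree: "\<forall>i\<in>pad (dt_path_vars T x). y ! i = x ! i"
      using that unfolding Q_def conj_eval_agree_conj .
    then have "dt_path_vars T y = dt_path_vars T x \<and> dt_eval T y = dt_eval T x"
      using pad[of x] by (intro dt_path_vars_agree) blast
    with agree show ?thesis
      unfolding Q_def agree_conj_def by (auto intro: image_cong)
  qed
  have accepting: "\<C> \<inter> {L. conj_eval L x} = (if dt_eval T x then {Q x} else {})"
    if "length x = k" for x
    using that Q_self by (auto simp: \<C>_def dest: Q_agree)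
  show thesis
  proof (rule that)
    show "finite \<C>"
      unfolding \<C>_def using finite_bool_lists_length_eq[of k] by simp
    show "\<forall>L\<in>\<C>. finite L \<and> (\<forall>(i, b)\<in>L. i < k) \<and> card L = d"
      using pad by (auto simp: \<C>_def Q_def card_agree_conj)
        (auto simp: agree_conj_def intro: finite_subset)
    show "(\<Sum>L\<in>\<C>. of_bool (conj_eval L x)) = (of_bool (dt_eval T x) :: real)" if "length x = k" for x
      using \<open>finite \<C>\<close> by (simp add: accepting[OF that])
  qed
qed

lemma rdt_prob1_conj_combination:
  assumes "rdt_cost_le k R d" "d \<le> k"
  obtains \<C> :: "(nat \<times> bool) set set" and w
  where "finite \<C>" "\<forall>L\<in>\<C>. finite L \<and> (\<forall>(i, b)\<in>L. i < k) \<and> card L = d" "\<forall>L. 0 \<le> w L"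
    "\<And>x. length x = k \<Longrightarrow> rdt_prob1 R x = (\<Sum>L\<in>\<C>. w L * of_bool (conj_eval L x))"
proof -
  let ?F = "set_pmf R"
  have "\<forall>T\<in>?F. \<exists>\<C> :: (nat \<times> bool) set set. finite \<C> \<and>
      (\<forall>L\<in>\<C>. finite L \<and> (\<forall>(i, b)\<in>L. i < k) \<and> card L = d) \<and>
      (\<forall>x. length x = k \<longrightarrow> (\<Sum>L\<in>\<C>. of_bool (conj_eval L x)) = (of_bool (dt_eval T x) :: real))"
    (is "\<forall>T\<in>?F. \<exists>\<C>. ?partition T \<C>")
  proof
    fix T assume "T \<in> ?F"
    with assms have "dt_valid k T" "dt_depth T \<le> d"
      unfolding rdt_cost_le_def by auto
    show "\<exists>\<C>. ?partition T \<C>"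
      by (rule dt_eval_conj_partition[OF \<open>dt_valid k T\<close> \<open>dt_depth T \<le> d\<close> assms(2)]) blast
  qed
  from bchoice[OF this] obtain \<C>\<^sub>T where \<C>\<^sub>T: "\<forall>T\<in>?F. ?partition T (\<C>\<^sub>T T)"
    by blast
  define \<C> where "\<C> = (\<Union>T\<in>?F. \<C>\<^sub>T T)"
  define w where "w L = (\<Sum>T\<in>?F. pmf R T * of_bool (L \<in> \<C>\<^sub>T T))" for L
  have fin_F: "finite ?F"
    using assms(1) by (rule finite_set_pmf_rdt)
  show thesis
  proof (rule that)
    show "finite \<C>"
      unfolding \<C>_def using fin_F \<C>\<^sub>T by simp
    show "\<forall>L\<in>\<C>. finite L \<and> (\<forall>(i, b)\<in>L. i < k) \<and> card L = d"
      unfolding \<C>_def using \<C>\<^sub>T by blast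
    show "\<forall>L. 0 \<le> w L"
      unfolding w_def by (simp add: sum_nonneg)
    fix x :: "bool list" assume "length x = k"
    have "rdt_prob1 R x = (\<Sum>T\<in>?F. pmf R T * of_bool (dt_eval T x))"
      unfolding rdt_prob1_def using fin_F by (rule measure_pmf_prob_eq_sum) simp
    also have "\<dots> = (\<Sum>T\<in>?F. pmf R T * (\<Sum>L\<in>\<C>\<^sub>T T. of_bool (conj_eval L x)))"
      using \<C>\<^sub>T \<open>length x = k\<close> by (intro sum.cong refl) (simp del: sum_of_bool_eq)
    also have "\<dots> = (\<Sum>T\<in>?F. \<Sum>L\<in>\<C>. pmf R T * of_bool (L \<in> \<C>\<^sub>T T) * of_bool (conj_eval L x))"
    proof (rule sum.cong [OF refl])
      fix T assume "T \<in> ?F"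
      then have "\<C>\<^sub>T T \<subseteq> \<C>"
        unfolding \<C>_def by blast
      with \<open>finite \<C>\<close> have "(\<Sum>L\<in>\<C>\<^sub>T T. of_bool (conj_eval L x)) =
          (\<Sum>L\<in>\<C>. of_bool (L \<in> \<C>\<^sub>T T) * of_bool (conj_eval L x) :: real)"
        by (intro sum.mono_neutral_cong_left) auto
      then show "pmf R T * (\<Sum>L\<in>\<C>\<^sub>T T. of_bool (conj_eval L x)) =
          (\<Sum>L\<in>\<C>. pmf R T * of_bool (L \<in> \<C>\<^sub>T T) * of_bool (conj_eval L x))"
        by (simp add: sum_distrib_left mult.assoc)
    qed
    also have "\<dots> = (\<Sum>L\<in>\<C>. w L * of_bool (conj_eval L x))"
      unfolding w_def by (subst sum.swap) (simp add: sum_distrib_right)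
    finally show "rdt_prob1 R x = (\<Sum>L\<in>\<C>. w L * of_bool (conj_eval L x))" .
  qed
qed

lemma expectation_conj_combination:
  assumes "\<forall>x\<in>set_pmf D. f x = (\<Sum>L\<in>\<C>. w L * of_bool (conj_eval L x))"
  shows "measure_pmf.expectation D f = (\<Sum>L\<in>\<C>. w L * conj_prob L D)"
proof -
  have "measure_pmf.expectation D f =
      measure_pmf.expectation D (\<lambda>x. \<Sum>L\<in>\<C>. w L * indicator {y. conj_eval L y} x)"
    using assms by (intro integral_cong_AE) (auto simp: AE_measure_pmf_iff indicator_def)
  also have "\<dots> = (\<Sum>L\<in>\<C>. w L * conj_prob L D)"
    by (simp add: conj_prob_def measure_pmf.emeasure_eq_measure)
  finally show ?thesis .
qed

subsection \<open>Averaging\<close>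

lemma averaging_index_ratio_le:
  fixes a b c w :: "'i \<Rightarrow> real"
  assumes "finite I" "\<forall>j\<in>I. 0 \<le> w j \<and> 0 \<le> a j \<and> 0 \<le> c j" "0 < \<delta>"
    and "(\<Sum>j\<in>I. w j * a j) \<le> \<alpha>" "(\<Sum>j\<in>I. w j * c j) \<le> \<gamma>"
    and "\<alpha> / \<delta> + \<gamma> / (1 + \<delta>) < (\<Sum>j\<in>I. w j * b j)"
  shows "\<exists>j\<in>I. a j \<le> \<delta> * b j \<and> c j \<le> (1 + \<delta>) * b j \<and> 0 < b j"
proof (rule ccontr)
  assume none: "\<not> ?thesis"
  have "b j \<le> a j / \<delta> + c j / (1 + \<delta>)" if "j \<in> I" for j
  proof -
    have "0 \<le> a j / \<delta>" "0 \<le> c j / (1 + \<delta>)"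
      using \<open>0 < \<delta>\<close> that assms(2) by auto
    moreover have "b j \<le> 0 \<or> b j < a j / \<delta> \<or> b j < c j / (1 + \<delta>)"
      using none that \<open>0 < \<delta>\<close> by (auto simp: pos_less_divide_eq mult.commute)
    ultimately show ?thesis
      by linarith
  qed
  with assms(2) have "(\<Sum>j\<in>I. w j * b j) \<le> (\<Sum>j\<in>I. w j * (a j / \<delta> + c j / (1 + \<delta>)))"
    by (intro sum_mono mult_left_mono) auto
  also have "\<dots> = (\<Sum>j\<in>I. w j * a j) / \<delta> + (\<Sum>j\<in>I. w j * c j) / (1 + \<delta>)"
    by (simp add: distrib_left sum.distrib sum_divide_distrib)
  also have "\<dots> \<le> \<alpha> / \<delta> + \<gamma> / (1 + \<delta>)"
    using assms(3-5) by (intro add_mono divide_right_mono) auto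
  finally show False
    using assms(6) by simp
qed

lemma wapp_gap:
  fixes \<epsilon> t :: real
  assumes "0 < \<epsilon>" "\<epsilon> \<le> 1/10" "0 < t"
  shows "\<epsilon> * t / (2 * sqrt \<epsilon>) + t / (1 + 2 * sqrt \<epsilon>) < (1 - \<epsilon>) * t"
proof -
  define s where "s = sqrt \<epsilon>"
  have "0 < s" and \<epsilon>_eq: "\<epsilon> = s * s"
    using assms(1) by (auto simp: s_def)
  have "s < 1/2"
  proof (rule ccontr)
    assume "\<not> s < 1/2"
    then have "1/2 * (1/2) \<le> s * s"
      by (intro mult_mono) auto
    with assms(2) \<epsilon>_eq show False
      by simp
  qed
  with \<open>0 < s\<close> have "s * s < 1/2 * (1/2)"
    by (intro mult_strict_mono) auto
  \<comment> \<open>\<open>(1 - s\<^sup>2 - s/2)(1 + 2s) = 1 + s (3/2 - 2s - 2s\<^sup>2)\<close>\<close>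
  with \<open>0 < s\<close> \<open>s < 1/2\<close> have "0 < s * (3/2 - 2 * s - 2 * s * s)"
    by (intro mult_pos_pos) auto
  then have "1 < (1 - s * s - s / 2) * (1 + 2 * s)"
    by (simp add: algebra_simps)
  moreover have "0 < 1 + 2 * s"
    using \<open>0 < s\<close> by simp
  ultimately have "1 / (1 + 2 * s) < 1 - s * s - s / 2"
    by (simp add: divide_less_eq)
  then have "s / 2 + 1 / (1 + 2 * s) < 1 - s * s"
    by simp
  then have "(s / 2 + 1 / (1 + 2 * s)) * t < (1 - s * s) * t"
    using assms(3) by (rule mult_strict_right_mono)
  moreover have "\<epsilon> * t / (2 * s) = s / 2 * t"
    using \<open>0 < s\<close> \<epsilon>_eq by simp
  ultimately show ?thesis
    unfolding s_def[symmetric] by (simp add: \<epsilon>_eq distrib_right)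
qed

lemma wapp_conj_averages:
  assumes "wapp_computes k \<epsilon> h R" "rdt_cost_le k R d" "d \<le> k" "\<epsilon> \<le> 1"
    and "set_pmf D0 \<subseteq> {x. length x = k \<and> h x = Some False}"
    and "set_pmf D1 \<subseteq> {x. length x = k \<and> h x = Some True}"
    and "set_pmf D2 \<subseteq> {x. length x = k \<and> h x \<noteq> None}"
  obtains \<C> :: "(nat \<times> bool) set set" and w t
  where "finite \<C>" "\<forall>L\<in>\<C>. finite L \<and> (\<forall>(i, b)\<in>L. i < k) \<and> card L = d" "\<forall>L. 0 \<le> w L"
    "0 < t" "(1 - \<epsilon>) * t \<le> (\<Sum>L\<in>\<C>. w L * conj_prob L D1)"
    "(\<Sum>L\<in>\<C>. w L * conj_prob L D0) \<le> \<epsilon> * t" "(\<Sum>L\<in>\<C>. w L * conj_prob L D2) \<le> t"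
proof -
  obtain t where "0 < t"
    and yes: "\<And>x. length x = k \<Longrightarrow> h x = Some True \<Longrightarrow>
      (1 - \<epsilon>) * t \<le> rdt_prob1 R x \<and> rdt_prob1 R x \<le> t"
    and no: "\<And>x. length x = k \<Longrightarrow> h x = Some False \<Longrightarrow> rdt_prob1 R x \<le> \<epsilon> * t"
    using assms(1) unfolding wapp_computes_def by blast
  obtain \<C> w where \<C>: "finite \<C>" "\<forall>L\<in>\<C>. finite L \<and> (\<forall>(i, b)\<in>L. i < k) \<and> card L = d"
    "\<forall>L. 0 \<le> w L" "\<And>x. length x = k \<Longrightarrow> rdt_prob1 R x = (\<Sum>L\<in>\<C>. w L * of_bool (conj_eval L x))"
    using rdt_prob1_conj_combination[OF assms(2,3)] by blast
  have "\<epsilon> * t \<le> t"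
    using assms(4) \<open>0 < t\<close> by simp
  have average: "(\<Sum>L\<in>\<C>. w L * conj_prob L D) = measure_pmf.expectation D (rdt_prob1 R)"
    and integrable: "integrable (measure_pmf D) (rdt_prob1 R)"
    if "set_pmf D \<subseteq> {x. length x = k}" for D
  proof -
    show "(\<Sum>L\<in>\<C>. w L * conj_prob L D) = measure_pmf.expectation D (rdt_prob1 R)"
      using that \<C>(4) by (intro expectation_conj_combination[symmetric]) auto
    show "integrable (measure_pmf D) (rdt_prob1 R)"
      using that finite_bool_lists_length_eq by (intro integrable_measure_pmf_finite) (rule finite_subset)
  qed
  have D0: "set_pmf D0 \<subseteq> {x. length x = k}" and D1: "set_pmf D1 \<subseteq> {x. length x = k}"
    and D2: "set_pmf D2 \<subseteq> {x. length x = k}"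
    using assms(5-7) by auto
  show thesis
  proof (rule that[OF \<C>(1-3) \<open>0 < t\<close>])
    show "(1 - \<epsilon>) * t \<le> (\<Sum>L\<in>\<C>. w L * conj_prob L D1)"
      unfolding average[OF D1] using assms(6) yes
      by (intro measure_pmf.integral_ge_const integrable[OF D1]) (auto simp: AE_measure_pmf_iff)
    show "(\<Sum>L\<in>\<C>. w L * conj_prob L D0) \<le> \<epsilon> * t"
      unfolding average[OF D0] using assms(5) no
      by (intro measure_pmf.integral_le_const integrable[OF D0]) (auto simp: AE_measure_pmf_iff)
    have at_most_t: "rdt_prob1 R x \<le> t" if "x \<in> set_pmf D2" for x
    proof -
      from that assms(7) have "length x = k" "h x = Some True \<or> h x = Some False"
        by auto
      with yes[of x] no[of x] \<open>\<epsilon> * t \<le> t\<close> show ?thesis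
        by auto
    qed
    show "(\<Sum>L\<in>\<C>. w L * conj_prob L D2) \<le> t"
      unfolding average[OF D2]
      by (intro measure_pmf.integral_le_const integrable[OF D2]) (simp add: AE_measure_pmf_iff at_most_t)
  qed
qed

theorem fact3p1:
  fixes k :: nat and h :: "bool list \<Rightarrow> bool option"
    and D0 D1 D2 :: "bool list pmf" and \<epsilon> :: real
  assumes "set_pmf D0 \<subseteq> {x. length x = k \<and> h x = Some False}"
    and "set_pmf D1 \<subseteq> {x. length x = k \<and> h x = Some True}"
    and "set_pmf D2 \<subseteq> {x. length x = k \<and> h x \<noteq> None}"
    and "0 < \<epsilon>" and "\<epsilon> \<le> 1/10"
  shows "\<exists>L. finite L \<and> (\<forall>(i, b)\<in>L. i < k) \<and> card L = WAPP k \<epsilon> h \<and>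
           conj_prob L D0 \<le> (2 * sqrt \<epsilon>) * conj_prob L D1 \<and>
           conj_prob L D2 \<le> (1 + 2 * sqrt \<epsilon>) * conj_prob L D1 \<and>
           conj_prob L D1 > 0"
proof -
  have "0 \<le> \<epsilon>" "\<epsilon> \<le> 1"
    using assms(4,5) by auto
  obtain R where "rdt_cost_le k R (WAPP k \<epsilon> h)" "wapp_computes k \<epsilon> h R"
    using WAPP_attained[OF \<open>0 \<le> \<epsilon>\<close>] .
  from wapp_conj_averages[OF \<open>wapp_computes k \<epsilon> h R\<close> this(1) WAPP_le_length[OF \<open>0 \<le> \<epsilon>\<close>]
      \<open>\<epsilon> \<le> 1\<close> assms(1-3)]
  obtain \<C> :: "(nat \<times> bool) set set" and w t
    where \<C>: "finite \<C>" "\<forall>L\<in>\<C>. finite L \<and> (\<forall>(i, b)\<in>L. i < k) \<and> card L = WAPP k \<epsilon> h"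
      and "\<forall>L. 0 \<le> w L" "0 < t"
      and D1: "(1 - \<epsilon>) * t \<le> (\<Sum>L\<in>\<C>. w L * conj_prob L D1)"
      and D0: "(\<Sum>L\<in>\<C>. w L * conj_prob L D0) \<le> \<epsilon> * t"
      and D2: "(\<Sum>L\<in>\<C>. w L * conj_prob L D2) \<le> t" .
  have nonneg: "\<forall>L\<in>\<C>. 0 \<le> w L \<and> 0 \<le> conj_prob L D0 \<and> 0 \<le> conj_prob L D2"
    using \<open>\<forall>L. 0 \<le> w L\<close> by (simp add: conj_prob_def)
  have "0 < 2 * sqrt \<epsilon>"
    using assms(4) by simp
  moreover have "\<epsilon> * t / (2 * sqrt \<epsilon>) + t / (1 + 2 * sqrt \<epsilon>) < (\<Sum>L\<in>\<C>. w L * conj_prob L D1)"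
    using wapp_gap[OF assms(4,5) \<open>0 < t\<close>] D1 by linarith
  ultimately have "\<exists>L\<in>\<C>. conj_prob L D0 \<le> 2 * sqrt \<epsilon> * conj_prob L D1 \<and>
      conj_prob L D2 \<le> (1 + 2 * sqrt \<epsilon>) * conj_prob L D1 \<and> 0 < conj_prob L D1"
    by (rule averaging_index_ratio_le[OF \<C>(1) nonneg _ D0 D2])
  then obtain L where "L \<in> \<C>" and good: "conj_prob L D0 \<le> 2 * sqrt \<epsilon> * conj_prob L D1 \<and>
      conj_prob L D2 \<le> (1 + 2 * sqrt \<epsilon>) * conj_prob L D1 \<and> 0 < conj_prob L D1" ..
  have "finite L \<and> (\<forall>(i, b)\<in>L. i < k) \<and> card L = WAPP k \<epsilon> h"
    using \<C>(2) \<open>L \<in> \<C>\<close> by (rule bspec)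
  with good show ?thesis
    by (intro exI[of _ L]) simp
qed

end
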